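(* Every closed $\mu$--Darboux transform $\hat f:T^2\to\mathbb R^4$ of a Hamiltonian stationary torus $f:T^2\to\mathbb R^4$ is a monochromatic Darboux transform of $f$, and vice versa.
   Context: Identify $\mathbb R^4$ with $\mathbb H$ and $\mathbb C$ with $\mathrm{span}_{\mathbb R}\{1,i\}$; $\langle\cdot,\cdot\rangle$ is the Euclidean inner product on $\mathbb C\cong\mathbb R^2$. $\Gamma\subset\mathbb C$ a lattice, $T^2=\mathbb C/\Gamma$, $\Gamma^*$ its dual lattice. A Hamiltonian stationary torus is a $\Gamma$-periodic conformal immersion $f:\mathbb C\to\mathbb H$ with $df=e^{j\beta/2}dz\,g$, $dz=dx+i\,dy$, $g$ nowhere zero, $\beta(z)=2\pi\langle\beta_0,z\rangle$, $0\ne\beta_0\in\Gamma^*$; convention $*dz=i\,dz$; left normal $N=e^{j\beta}i$. $\alpha$ is holomorphic if $*d\alpha=N\,d\alpha$. With $(dN)'=\frac12(dN-N*dN)=-df\,H$, set $d^\mu\alpha=d\alpha+\frac12df\,H\,(N\alpha(a-1)+\alpha b)$, $a=\frac{\mu+\mu^{-1}}2$, $b=\frac{\mu^{-1}-\mu}2i$ (right multiplication), $\mu\in\mathbb C_*$; $d^\mu$-parallel sections are holomorphic. With $h^{A,B}(\gamma)=e^{2\pi(\langle A,\gamma\rangle-i\langle B,\gamma\rangle)}$, $\Gamma^*_{A,B}=\{\delta\in\Gamma^*+\frac{\beta_0}2:|\delta-B|^2-|A|^2=\frac{|\beta_0|^2}4,\ \langle\delta-B,A\rangle=0\}$, $e_\delta(z)=e^{2\pi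 i\langle\delta,z\rangle}$, $\lambda_\delta=\frac2{\beta_0}(\delta-iA-B)$, a monochromatic holomorphic section is a nonzero complex multiple of $e^{j\beta/2}(1-k\lambda_\delta)e_{\delta-B}e^{2\pi\langle A,\cdot\rangle}$, $\delta\in\Gamma^*_{A,B}$. Darboux transform given by a nowhere vanishing holomorphic $\alpha$ with multiplier ($\alpha(z+\gamma)=\alpha(z)h(\gamma)$, $h:\Gamma\to\mathbb C_*$): define $\hat T$ by $d\alpha=-df\,\hat T\alpha$, $\nu=\hat T\alpha$, $\hat f=\begin{pmatrix}f\nu+\alpha\\ \nu\end{pmatrix}\mathbb H$ ($=f+\hat T^{-1}$ where $\hat T\ne0$). It is monochromatic if $\alpha$ is monochromatic, and a $\mu$--Darboux transform if $d^\mu\alpha=0$; it is closed if it is defined on $T^2$, i.e. $\alpha$ has a multiplier on $\Gamma$. *)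

theory Defs
  imports "HOL-Analysis.Analysis"
begin

text \<open>We model the quaternions H as pairs (a,b) of complex numbers standing for a + j b,
  where C = span{1,i} sits inside H as (c,0).  With i j = k and j c = cnj c j one gets
  the product below.\<close>

type_synonym quat = "complex \<times> complex"

definition qmul :: "quat \<Rightarrow> quat \<Rightarrow> quat" (infixl "\<odot>" 70) where
  "qmul p q = (fst p * fst q - cnj (snd p) * snd q, cnj (fst p) * snd q + snd p * fst q)"

definition qc :: "complex \<Rightarrow> quat" where "qc c = (c, 0)"
definition qi :: quat where "qi = (\<i>, 0)"
definition qj :: quat where "qj = (0, 1)"
definition qk :: quat where "qk = (0, - \<i>)"   \<comment> \<open>k = i j\<close>

definition qexpj :: "real \<Rightarrow> quat" where   \<comment> \<open>e^{j t} = cos t + j sin t\<close>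
  "qexpj t = (complex_of_real (cos t), complex_of_real (sin t))"

definition D :: "(complex \<Rightarrow> 'a::real_normed_vector) \<Rightarrow> complex \<Rightarrow> complex \<Rightarrow> 'a" where
  "D F z = frechet_derivative F (at z)"

fun Ck :: "nat \<Rightarrow> (complex \<Rightarrow> 'a::real_normed_vector) \<Rightarrow> bool" where
  "Ck 0 F = continuous_on UNIV F"
| "Ck (Suc n) F = ((\<forall>z. F differentiable (at z)) \<and> (\<forall>v. Ck n (\<lambda>z. D F z v)))"

definition smooth :: "(complex \<Rightarrow> 'a::real_normed_vector) \<Rightarrow> bool" where
  "smooth F \<longleftrightarrow> (\<forall>n. Ck n F)"

definition lattice :: "complex set \<Rightarrow> bool" where
  "lattice \<Gamma> \<longleftrightarrow> (\<exists>\<omega>1 \<omega>2. Im (cnj \<omega>1 * \<omega>2) \<noteq> 0 \<and>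
      \<Gamma> = {of_int m * \<omega>1 + of_int n * \<omega>2 | m n. True})"

definition dual_lattice :: "complex set \<Rightarrow> complex set" where
  "dual_lattice \<Gamma> = {\<delta>. \<forall>\<gamma>\<in>\<Gamma>. \<delta> \<bullet> \<gamma> \<in> \<int>}"

definition beta :: "complex \<Rightarrow> complex \<Rightarrow> real" where
  "beta \<beta>0 z = 2 * pi * (\<beta>0 \<bullet> z)"

definition ham_stat_torus :: "complex set \<Rightarrow> complex \<Rightarrow> (complex \<Rightarrow> quat) \<Rightarrow> bool" where
  "ham_stat_torus \<Gamma> \<beta>0 f \<longleftrightarrow> lattice \<Gamma> \<and> \<beta>0 \<in> dual_lattice \<Gamma> \<and> \<beta>0 \<noteq> 0 \<and> smooth f \<and>
     (\<forall>z. \<forall>\<gamma>\<in>\<Gamma>. f (z + \<gamma>) = f z) \<and>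
     (\<exists>g::complex \<Rightarrow> quat. (\<forall>z. g z \<noteq> 0) \<and>
        (\<forall>z. (f has_derivative (\<lambda>v. qexpj (beta \<beta>0 z / 2) \<odot> qc v \<odot> g z)) (at z)))"

definition Nrm :: "complex \<Rightarrow> complex \<Rightarrow> quat" where
  "Nrm \<beta>0 z = qexpj (beta \<beta>0 z) \<odot> qi"

text \<open>Hodge star: (*omega)(v) = omega(i v), so that *dz = i dz.
  (dN)' = (dN - N *dN)/2, and H is defined by (dN)' = - df H.\<close>
definition dN' :: "complex \<Rightarrow> complex \<Rightarrow> complex \<Rightarrow> quat" where
  "dN' \<beta>0 z v = (1/2) *\<^sub>R (D (Nrm \<beta>0) z v - Nrm \<beta>0 z \<odot> D (Nrm \<beta>0) z (\<i> * v))"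

definition Hmc :: "complex \<Rightarrow> (complex \<Rightarrow> quat) \<Rightarrow> complex \<Rightarrow> quat" where
  "Hmc \<beta>0 f z = (SOME h. \<forall>v. dN' \<beta>0 z v = - (D f z v \<odot> h))"

definition holomorphic_sec :: "complex \<Rightarrow> (complex \<Rightarrow> quat) \<Rightarrow> bool" where
  "holomorphic_sec \<beta>0 \<alpha> \<longleftrightarrow> (\<forall>z v. D \<alpha> z (\<i> * v) = Nrm \<beta>0 z \<odot> D \<alpha> z v)"

definition dmu :: "complex \<Rightarrow> (complex \<Rightarrow> quat) \<Rightarrow> complex \<Rightarrow> (complex \<Rightarrow> quat) \<Rightarrow> complex \<Rightarrow> complex \<Rightarrow> quat" where
  "dmu \<beta>0 f \<mu> \<alpha> z v =
     (let a = (\<mu> + inverse \<mu>) / 2; b = (inverse \<mu> - \<mu>) / 2 * \<i> in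
      D \<alpha> z v + (1/2) *\<^sub>R (D f z v \<odot> Hmc \<beta>0 f z \<odot>
          (Nrm \<beta>0 z \<odot> \<alpha> z \<odot> qc (a - 1) + \<alpha> z \<odot> qc b)))"

definition has_multiplier :: "complex set \<Rightarrow> (complex \<Rightarrow> quat) \<Rightarrow> bool" where
  "has_multiplier \<Gamma> \<alpha> \<longleftrightarrow> (\<exists>h::complex \<Rightarrow> complex. \<forall>\<gamma>\<in>\<Gamma>. h \<gamma> \<noteq> 0 \<and>
      (\<forall>z. \<alpha> (z + \<gamma>) = \<alpha> z \<odot> qc (h \<gamma>)))"

definition closed_darboux_section :: "complex set \<Rightarrow> complex \<Rightarrow> (complex \<Rightarrow> quat) \<Rightarrow> bool" where
  "closed_darboux_section \<Gamma> \<beta>0 \<alpha> \<longleftrightarrow> smooth \<alpha> \<and> (\<forall>z. \<alpha> z \<noteq> 0) \<and>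
      holomorphic_sec \<beta>0 \<alpha> \<and> has_multiplier \<Gamma> \<alpha>"

definition That :: "(complex \<Rightarrow> quat) \<Rightarrow> (complex \<Rightarrow> quat) \<Rightarrow> complex \<Rightarrow> quat" where
  "That f \<alpha> z = (SOME t. \<forall>v. D \<alpha> z v = - (D f z v \<odot> t \<odot> \<alpha> z))"

definition nu :: "(complex \<Rightarrow> quat) \<Rightarrow> (complex \<Rightarrow> quat) \<Rightarrow> complex \<Rightarrow> quat" where
  "nu f \<alpha> z = That f \<alpha> z \<odot> \<alpha> z"

text \<open>fh : C -> H = R^4 is the Darboux transform given by alpha: for every z the
  point (f nu + alpha, nu) H of HP^1 equals (fh z, 1) H.\<close>
definition darboux_given_by :: "(complex \<Rightarrow> quat) \<Rightarrow> (complex \<Rightarrow> quat) \<Rightarrow> (complex \<Rightarrow> quat) \<Rightarrow> bool" where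
  "darboux_given_by f \<alpha> fh \<longleftrightarrow> (\<forall>z. \<exists>q. q \<noteq> 0 \<and>
      (f z \<odot> nu f \<alpha> z + \<alpha> z, nu f \<alpha> z) = (fh z \<odot> q, qc 1 \<odot> q))"

definition closed_mu_darboux ::
  "complex set \<Rightarrow> complex \<Rightarrow> (complex \<Rightarrow> quat) \<Rightarrow> complex \<Rightarrow> (complex \<Rightarrow> quat) \<Rightarrow> bool" where
  "closed_mu_darboux \<Gamma> \<beta>0 f \<mu> fh \<longleftrightarrow> (\<exists>\<alpha>. closed_darboux_section \<Gamma> \<beta>0 \<alpha> \<and>
      (\<forall>z v. dmu \<beta>0 f \<mu> \<alpha> z v = 0) \<and> darboux_given_by f \<alpha> fh)"

definition e_exp :: "complex \<Rightarrow> complex \<Rightarrow> complex" where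
  "e_exp \<delta> z = exp (2 * pi * \<i> * complex_of_real (\<delta> \<bullet> z))"

definition Gamma_AB :: "complex set \<Rightarrow> complex \<Rightarrow> complex \<Rightarrow> complex \<Rightarrow> complex set" where
  "Gamma_AB \<Gamma> \<beta>0 A B = {\<delta>. \<delta> \<in> (\<lambda>d. d + \<beta>0 / 2) ` dual_lattice \<Gamma> \<and>
      (cmod (\<delta> - B))\<^sup>2 - (cmod A)\<^sup>2 = (cmod \<beta>0)\<^sup>2 / 4 \<and> (\<delta> - B) \<bullet> A = 0}"

definition lam :: "complex \<Rightarrow> complex \<Rightarrow> complex \<Rightarrow> complex \<Rightarrow> complex" where
  "lam \<beta>0 A B \<delta> = 2 / \<beta>0 * (\<delta> - \<i> * A - B)"

definition monochromatic :: "complex set \<Rightarrow> complex \<Rightarrow> (complex \<Rightarrow> quat) \<Rightarrow> bool" where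
  "monochromatic \<Gamma> \<beta>0 \<alpha> \<longleftrightarrow> (\<exists>A B \<delta> c. \<delta> \<in> Gamma_AB \<Gamma> \<beta>0 A B \<and> c \<noteq> 0 \<and>
      \<alpha> = (\<lambda>z. qexpj (beta \<beta>0 z / 2) \<odot> (qc 1 - qk \<odot> qc (lam \<beta>0 A B \<delta>))
                 \<odot> qc (e_exp (\<delta> - B) z) \<odot> qc (complex_of_real (exp (2 * pi * (A \<bullet> z)))) \<odot> qc c))"

definition mono_darboux :: "complex set \<Rightarrow> complex \<Rightarrow> (complex \<Rightarrow> quat) \<Rightarrow> (complex \<Rightarrow> quat) \<Rightarrow> bool" where
  "mono_darboux \<Gamma> \<beta>0 f fh \<longleftrightarrow> (\<exists>\<alpha>. monochromatic \<Gamma> \<beta>0 \<alpha> \<and> closed_darboux_section \<Gamma> \<beta>0 \<alpha> \<and>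
      darboux_given_by f \<alpha> fh)"

end

theory Submission
  imports Defs
begin

text \<open>Write \<open>E = e^(j\<beta>/2)\<close>. Since \<open>df = E dz g\<close> and \<open>N = E i E\<^sup>-\<^sup>1\<close>, conjugation by \<open>E\<close>
  turns \<open>d^\<mu>\<alpha> = 0\<close> into a linear system with constant coefficients for \<open>\<phi> = E\<^sup>-\<^sup>1\<alpha>\<close>.
  Choosing \<open>s\<close> with \<open>s\<^sup>2\<mu> = -1\<close>, the combinations \<open>u = \<phi>\<^sub>1 + \<phi>\<^sub>2/(\<plusminus>s)\<close> satisfy
  \<open>du = \<Psi>\<^sub>\<plusminus>\<^sub>s u\<close> with \<open>\<Psi>\<^sub>s\<close> real linear and \<open>\<Psi>\<^sub>-\<^sub>s = -\<Psi>\<^sub>s\<close>, so every \<open>d^\<mu>\<close>-parallel section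
  is a combination of the two exponential sections \<open>E (1, \<plusminus>s) exp \<Psi>\<^sub>\<plusminus>\<^sub>s\<close>, and these are exactly
  the monochromatic sections. If a closed section involves both, comparing multipliers forces
  \<open>Re \<Psi>\<^sub>s = 0\<close> on the lattice, hence \<open>|s| = 1\<close>, and then the two exponential sections are right
  multiples of each other. Right multiplication by a nonzero constant quaternion does not change
  the Darboux transform, so every closed \<open>\<mu>\<close>-Darboux transform is monochromatic; conversely a
  monochromatic section with parameter \<open>s\<close> is parallel for \<open>\<mu> = -1/s\<^sup>2\<close>.\<close>

lemma qmul_fst [simp]: "fst (p \<odot> q) = fst p * fst q - cnj (snd p) * snd q"
  by (simp add: qmul_def)

lemma qmul_snd [simp]: "snd (p \<odot> q) = cnj (fst p) * snd q + snd p * fst q"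
  by (simp add: qmul_def)

lemma qmul_assoc: "(p \<odot> q) \<odot> r = p \<odot> (q \<odot> r)"
  by (simp add: prod_eq_iff algebra_simps)

lemma qmul_add_left: "(p + q) \<odot> r = p \<odot> r + q \<odot> r"
  and qmul_add_right: "r \<odot> (p + q) = r \<odot> p + r \<odot> q"
  and qmul_diff_right: "r \<odot> (p - q) = r \<odot> p - r \<odot> q"
  and qmul_uminus_left: "(- p) \<odot> r = - (p \<odot> r)"
  and qmul_uminus_right: "r \<odot> (- p) = - (r \<odot> p)"
  by (simp_all add: prod_eq_iff algebra_simps)

lemma qmul_scaleR_left: "(c *\<^sub>R p) \<odot> r = c *\<^sub>R (p \<odot> r)"
  and qmul_scaleR_right: "r \<odot> (c *\<^sub>R p) = c *\<^sub>R (r \<odot> p)"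
  by (simp_all add: prod_eq_iff algebra_simps scaleR_conv_of_real)

lemma qmul_zero [simp]: "0 \<odot> p = 0" "p \<odot> 0 = 0"
  by (simp_all add: prod_eq_iff)

lemma qc_one [simp]: "qc 1 \<odot> p = p" "p \<odot> qc 1 = p"
  by (simp_all add: prod_eq_iff qc_def)

lemma qc_zero [simp]: "qc 0 = 0"
  by (simp add: qc_def zero_prod_def)

lemma qc_eq_zero_iff: "qc c = 0 \<longleftrightarrow> c = 0"
  by (simp add: qc_def zero_prod_def)

lemma qc_mult: "qc a \<odot> qc b = qc (a * b)"
  by (simp add: prod_eq_iff qc_def)

lemma qmul_qc_right: "(p1, p2) \<odot> qc c = (p1 * c, p2 * c)"
  by (simp add: prod_eq_iff qc_def)

definition qcnj :: "quat \<Rightarrow> quat" where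
  "qcnj p = (cnj (fst p), - snd p)"

definition qinv :: "quat \<Rightarrow> quat" where
  "qinv p = (1 / ((cmod (fst p))\<^sup>2 + (cmod (snd p))\<^sup>2)) *\<^sub>R qcnj p"

lemma qnorm2_pos: "p \<noteq> 0 \<Longrightarrow> (cmod (fst p))\<^sup>2 + (cmod (snd p))\<^sup>2 > 0"
  by (cases p) (auto simp: zero_prod_def intro: add_pos_nonneg add_nonneg_pos)

lemma qmul_qcnj: "p \<odot> qcnj p = ((cmod (fst p))\<^sup>2 + (cmod (snd p))\<^sup>2) *\<^sub>R qc 1"
  and qcnj_qmul: "qcnj p \<odot> p = ((cmod (fst p))\<^sup>2 + (cmod (snd p))\<^sup>2) *\<^sub>R qc 1"
  by (simp_all add: prod_eq_iff qcnj_def qc_def scaleR_conv_of_real complex_mult_cnj cmod_power2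
      mult.commute[of "cnj _"])

lemma qinv_right: "p \<noteq> 0 \<Longrightarrow> p \<odot> qinv p = qc 1"
  using qnorm2_pos[of p] unfolding qinv_def qmul_scaleR_right qmul_qcnj by (auto simp: prod_eq_iff)

lemma qinv_left: "p \<noteq> 0 \<Longrightarrow> qinv p \<odot> p = qc 1"
  using qnorm2_pos[of p] unfolding qinv_def qmul_scaleR_left qcnj_qmul by (auto simp: prod_eq_iff)

lemma qinv_nonzero: "p \<noteq> 0 \<Longrightarrow> qinv p \<noteq> 0"
  by (metis qinv_right qmul_zero(2) qc_eq_zero_iff one_neq_zero)

lemma qmul_nonzero: "p \<noteq> 0 \<Longrightarrow> q \<noteq> 0 \<Longrightarrow> p \<odot> q \<noteq> 0"
  by (metis qc_one(2) qinv_left qinv_nonzero qinv_right qmul_assoc qmul_zero(1))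

lemma qmul_cancel_right: "r \<noteq> 0 \<Longrightarrow> p \<odot> r = q \<odot> r \<longleftrightarrow> p = q"
  by (metis qc_one(2) qinv_right qmul_assoc)

lemma bounded_bilinear_qmul: "bounded_bilinear qmul"
proof
  fix a a' b b' :: quat and r :: real
  show "(a + a') \<odot> b = a \<odot> b + a' \<odot> b" by (rule qmul_add_left)
  show "b \<odot> (a + a') = b \<odot> a + b \<odot> a'" by (rule qmul_add_right)
  show "(r *\<^sub>R a) \<odot> b = r *\<^sub>R (a \<odot> b)" by (rule qmul_scaleR_left)
  show "a \<odot> (r *\<^sub>R b) = r *\<^sub>R (a \<odot> b)" by (rule qmul_scaleR_right)
next
  show "\<exists>K. \<forall>a b. norm (a \<odot> b) \<le> norm a * norm b * K"
  proof (intro exI allI)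
    fix a b :: quat
    have comp: "norm (fst a) \<le> norm a" "norm (snd a) \<le> norm a"
      "norm (fst b) \<le> norm b" "norm (snd b) \<le> norm b"
      by (metis prod.collapse norm_fst_le norm_snd_le)+
    have "norm (fst (a \<odot> b)) \<le> norm (fst a) * norm (fst b) + norm (snd a) * norm (snd b)"
      by (simp add: norm_mult) (metis complex_mod_cnj norm_mult norm_triangle_ineq4)
    also have "\<dots> \<le> 2 * (norm a * norm b)"
      using add_mono[OF mult_mono[OF comp(1,3)] mult_mono[OF comp(2,4)]] by simp
    finally have fst_le: "norm (fst (a \<odot> b)) \<le> 2 * (norm a * norm b)" .
    have "norm (snd (a \<odot> b)) \<le> norm (fst a) * norm (snd b) + norm (snd a) * norm (fst b)"
      by (simp add: norm_mult) (metis complex_mod_cnj norm_mult norm_triangle_ineq)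
    also have "\<dots> \<le> 2 * (norm a * norm b)"
      using add_mono[OF mult_mono[OF comp(1,4)] mult_mono[OF comp(2,3)]] by simp
    finally have snd_le: "norm (snd (a \<odot> b)) \<le> 2 * (norm a * norm b)" .
    have "norm (a \<odot> b) \<le> norm (fst (a \<odot> b)) + norm (snd (a \<odot> b))"
      by (metis prod.collapse norm_Pair_le)
    thus "norm (a \<odot> b) \<le> norm a * norm b * 4" using fst_le snd_le by simp
  qed
qed

lemma bounded_linear_qmul_const: "bounded_linear (\<lambda>x. x \<odot> r)"
  by (rule bounded_bilinear.bounded_linear_left[OF bounded_bilinear_qmul])

lemma qexpj_add: "qexpj a \<odot> qexpj b = qexpj (a + b)"
  by (simp add: qexpj_def prod_eq_iff cos_add sin_add algebra_simps)

lemma qexpj_zero: "qexpj 0 = qc 1"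
  by (simp add: qexpj_def qc_def)

lemma qexpj_qj: "qexpj t \<odot> qj = qj \<odot> qexpj t"
  by (simp add: qexpj_def qj_def prod_eq_iff)

lemma qexpj_qi: "qexpj t \<odot> qi = qi \<odot> qexpj (- t)"
  by (simp add: qexpj_def qi_def prod_eq_iff)

lemma qexpj_pi_int:
  assumes "x \<in> \<int>"
  shows "qexpj (pi * x) = qc (complex_of_real (cos (pi * x)))"
    and "qexpj (- pi * x) = qc (complex_of_real (cos (pi * x)))"
    and "cos (pi * x) \<noteq> 0"
proof -
  have "sin (pi * x) = 0" using assms sin_times_pi_eq_0[of x] by (simp add: mult.commute)
  thus "qexpj (pi * x) = qc (complex_of_real (cos (pi * x)))"
    "qexpj (- pi * x) = qc (complex_of_real (cos (pi * x)))" "cos (pi * x) \<noteq> 0"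
    using sin_cos_squared_add[of "pi * x"] by (auto simp: qexpj_def qc_def)
qed

lemma D_eq_of_has_derivative: "(F has_derivative F') (at z) \<Longrightarrow> D F z = F'"
  unfolding D_def by (metis frechet_derivative_at)

lemma has_derivative_D: "F differentiable (at z) \<Longrightarrow> (F has_derivative D F z) (at z)"
  unfolding D_def by (rule frechet_derivative_works[THEN iffD1])

lemma qexpj_inner_has_derivative:
  "((\<lambda>z. qexpj (c * (b \<bullet> z))) has_derivative
     (\<lambda>v. (c * (b \<bullet> v)) *\<^sub>R (qexpj (c * (b \<bullet> z)) \<odot> qj))) (at z)"
proof -
  have "((\<lambda>z. (complex_of_real (cos (c * (b \<bullet> z))), complex_of_real (sin (c * (b \<bullet> z)))))
     has_derivative (\<lambda>v. (complex_of_real (- sin (c * (b \<bullet> z)) * (c * (b \<bullet> v))),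
          complex_of_real (cos (c * (b \<bullet> z)) * (c * (b \<bullet> v)))))) (at z)"
    by (auto intro!: derivative_eq_intros)
  moreover have "(\<lambda>v. (complex_of_real (- sin (c * (b \<bullet> z)) * (c * (b \<bullet> v))),
          complex_of_real (cos (c * (b \<bullet> z)) * (c * (b \<bullet> v)))))
     = (\<lambda>v. (c * (b \<bullet> v)) *\<^sub>R (qexpj (c * (b \<bullet> z)) \<odot> qj))"
    by (simp add: fun_eq_iff qexpj_def qj_def scaleR_conv_of_real prod_eq_iff algebra_simps)
  ultimately show ?thesis unfolding qexpj_def by simp
qed

lemma D_qmul_const:
  assumes "F differentiable (at z)"
  shows "D (\<lambda>z. F z \<odot> r) z v = D F z v \<odot> r"
  using D_eq_of_has_derivative[OF bounded_linear.has_derivative[OF bounded_linear_qmul_const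
        has_derivative_D[OF assms]]] by simp

lemma differentiable_qmul_const: "F differentiable (at z) \<Longrightarrow> (\<lambda>z. F z \<odot> r) differentiable (at z)"
  using bounded_linear.has_derivative[OF bounded_linear_qmul_const] unfolding differentiable_def by blast

lemma Ck_qmul_const: "Ck n F \<Longrightarrow> Ck n (\<lambda>z. F z \<odot> r)"
proof (induction n arbitrary: F)
  case 0
  then show ?case
    by (auto intro: continuous_on_compose2[OF bounded_linear.continuous_on[OF
          bounded_linear_qmul_const continuous_on_id]])
next
  case (Suc n)
  then have "\<forall>z. F differentiable (at z)" and "\<forall>v. Ck n (\<lambda>z. D F z v)" by auto
  then show ?case using Suc.IH by (simp add: D_qmul_const differentiable_qmul_const)
qed

lemma smooth_qmul_const: "smooth F \<Longrightarrow> smooth (\<lambda>z. F z \<odot> r)"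
  unfolding smooth_def using Ck_qmul_const by blast

lemma smooth_imp_differentiable: "smooth F \<Longrightarrow> F differentiable (at z)"
  unfolding smooth_def by (metis Ck.simps(2))

lemma of_real_inner_complex: "complex_of_real (\<beta> \<bullet> v) = (cnj \<beta> * v + \<beta> * cnj v) / 2"
  by (simp add: complex_eq_iff inner_complex_def algebra_simps)

section \<open>The gauge \<open>e^(j\<beta>/2)\<close>\<close>

definition ejb :: "complex \<Rightarrow> complex \<Rightarrow> quat" where
  "ejb \<beta>0 z = qexpj (pi * (\<beta>0 \<bullet> z))"

definition ejb_inv :: "complex \<Rightarrow> complex \<Rightarrow> quat" where
  "ejb_inv \<beta>0 z = qexpj (- pi * (\<beta>0 \<bullet> z))"

lemma ejb_ejb_inv [simp]:
  "ejb \<beta>0 z \<odot> (ejb_inv \<beta>0 z \<odot> x) = x" "ejb_inv \<beta>0 z \<odot> (ejb \<beta>0 z \<odot> x) = x"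
  by (simp_all add: ejb_def ejb_inv_def qmul_assoc[symmetric] qexpj_add qexpj_zero)

lemma ejb_inv_qj: "ejb_inv \<beta>0 z \<odot> (qj \<odot> x) = qj \<odot> (ejb_inv \<beta>0 z \<odot> x)"
  by (simp add: ejb_inv_def qmul_assoc[symmetric] qexpj_qj)

lemma Nrm_eq_ejb: "Nrm \<beta>0 z = ejb \<beta>0 z \<odot> (qi \<odot> ejb_inv \<beta>0 z)"
proof -
  have "Nrm \<beta>0 z = qexpj (pi * (\<beta>0 \<bullet> z)) \<odot> qexpj (pi * (\<beta>0 \<bullet> z)) \<odot> qi"
    by (simp add: Nrm_def beta_def qexpj_add algebra_simps)
  thus ?thesis by (simp add: ejb_def ejb_inv_def qmul_assoc qexpj_qi)
qed

lemma ejb_shift: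
  assumes "\<beta>0 \<bullet> \<gamma> \<in> \<int>"
  shows "ejb \<beta>0 (z + \<gamma>) = ejb \<beta>0 z \<odot> qc (complex_of_real (cos (pi * (\<beta>0 \<bullet> \<gamma>))))"
  unfolding ejb_def qexpj_pi_int(1)[OF assms, symmetric] qexpj_add
  by (simp add: inner_add_right algebra_simps)

lemma ham_stat_torus_Df:
  assumes "ham_stat_torus \<Gamma> \<beta>0 f"
  obtains g where "\<And>z. g z \<noteq> 0" "\<And>z v. D f z v = ejb \<beta>0 z \<odot> qc v \<odot> g z"
proof -
  from assms obtain g where g: "\<And>z. g z \<noteq> 0"
    "\<And>z. (f has_derivative (\<lambda>v. qexpj (beta \<beta>0 z / 2) \<odot> qc v \<odot> g z)) (at z)"
    unfolding ham_stat_torus_def by blast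
  have "beta \<beta>0 z / 2 = pi * (\<beta>0 \<bullet> z)" for z
    by (simp add: beta_def)
  hence "D f z v = ejb \<beta>0 z \<odot> qc v \<odot> g z" for z v
    using D_eq_of_has_derivative[OF g(2)] by (simp add: ejb_def)
  thus ?thesis using that g(1) by blast
qed

lemma has_derivative_ejb_inv_qmul:
  assumes "(\<alpha> has_derivative \<alpha>') (at z)"
  shows "((\<lambda>z. ejb_inv \<beta>0 z \<odot> \<alpha> z) has_derivative
    (\<lambda>v. ejb_inv \<beta>0 z \<odot> \<alpha>' v + (- pi * (\<beta>0 \<bullet> v)) *\<^sub>R (qj \<odot> (ejb_inv \<beta>0 z \<odot> \<alpha> z)))) (at z)"
proof -
  have "(ejb_inv \<beta>0 has_derivative (\<lambda>v. (- pi * (\<beta>0 \<bullet> v)) *\<^sub>R (ejb_inv \<beta>0 z \<odot> qj))) (at z)"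
    unfolding ejb_inv_def[abs_def] by (rule qexpj_inner_has_derivative)
  from bounded_bilinear.FDERIV[OF bounded_bilinear_qmul this assms] show ?thesis
    by (simp add: qmul_scaleR_left qmul_uminus_left qmul_assoc ejb_inv_qj[symmetric])
qed

text \<open>\<open>(dN)'\<close> is \<open>e^(j\<beta>/2) (dz K) e^(-j\<beta>/2)\<close> with the constant quaternion \<open>K\<close> below.\<close>

definition dN_coeff :: "complex \<Rightarrow> quat" where
  "dN_coeff \<beta>0 = pi *\<^sub>R (qc (- \<i> * cnj \<beta>0) \<odot> qj)"

lemma D_Nrm:
  "D (Nrm \<beta>0) z v = (2 * pi * (\<beta>0 \<bullet> v)) *\<^sub>R (qexpj (2 * pi * (\<beta>0 \<bullet> z)) \<odot> qj \<odot> qi)"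
proof -
  have Nrm_eq: "Nrm \<beta>0 = (\<lambda>z. qexpj (2 * pi * (\<beta>0 \<bullet> z)) \<odot> qi)"
    by (simp add: fun_eq_iff Nrm_def beta_def)
  have "((\<lambda>z. qexpj (2 * pi * (\<beta>0 \<bullet> z)) \<odot> qi) has_derivative
     (\<lambda>v. (2 * pi * (\<beta>0 \<bullet> v)) *\<^sub>R (qexpj (2 * pi * (\<beta>0 \<bullet> z)) \<odot> qj) \<odot> qi)) (at z)"
    by (rule bounded_linear.has_derivative[OF bounded_linear_qmul_const qexpj_inner_has_derivative])
  from D_eq_of_has_derivative[OF this] show ?thesis
    unfolding Nrm_eq by (simp add: qmul_scaleR_left)
qed

lemma dN'_eq_conj:
  "dN' \<beta>0 z v = ejb \<beta>0 z \<odot> (qc v \<odot> dN_coeff \<beta>0) \<odot> ejb_inv \<beta>0 z"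
proof -
  define t where "t = pi * (\<beta>0 \<bullet> z)"
  define w where "w = cnj \<beta>0 * v"
  have inner_w: "\<beta>0 \<bullet> v = Re w" "\<beta>0 \<bullet> (\<i> * v) = - Im w"
    by (simp_all add: w_def inner_complex_def algebra_simps)
  have coeff: "qc v \<odot> dN_coeff \<beta>0 = pi *\<^sub>R (0, \<i> * cnj w)"
    by (simp add: dN_coeff_def qc_def qj_def prod_eq_iff w_def scaleR_conv_of_real algebra_simps)
  have "dN' \<beta>0 z v = (1/2) *\<^sub>R ((2 * pi * Re w) *\<^sub>R (qexpj (2*t) \<odot> qj \<odot> qi) -
      (qexpj (2*t) \<odot> qi) \<odot> ((2 * pi * (- Im w)) *\<^sub>R (qexpj (2*t) \<odot> qj \<odot> qi)))"
    unfolding dN'_def D_Nrm inner_w by (simp add: Nrm_def beta_def t_def mult.assoc)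
  also have "\<dots> = qexpj t \<odot> (pi *\<^sub>R (0, \<i> * cnj w)) \<odot> qexpj (- t)"
    apply (simp add: qexpj_def qi_def qj_def prod_eq_iff complex_eq_iff cos_double sin_double
        scaleR_conv_of_real)
    apply (simp add: algebra_simps power2_eq_square)
    apply (insert sin_cos_squared_add[of t])
    apply algebra
    done
  finally show ?thesis
    by (simp add: coeff ejb_def ejb_inv_def t_def)
qed

lemma Df_Hmc:
  assumes "ham_stat_torus \<Gamma> \<beta>0 f"
  shows "D f z v \<odot> Hmc \<beta>0 f z = - dN' \<beta>0 z v"
proof -
  obtain g where g: "\<And>z. g z \<noteq> 0" "\<And>z v. D f z v = ejb \<beta>0 z \<odot> qc v \<odot> g z"
    using ham_stat_torus_Df[OF assms] by blast
  define H where "H = - (qinv (g z) \<odot> (dN_coeff \<beta>0 \<odot> ejb_inv \<beta>0 z))"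
  have g_qinv: "g z \<odot> (qinv (g z) \<odot> x) = x" for x
    using qinv_right[OF g(1)] by (simp add: qmul_assoc[symmetric])
  have "dN' \<beta>0 z v = - (D f z v \<odot> H)" for v
    using g_qinv by (simp add: g(2) H_def dN'_eq_conj qmul_uminus_right qmul_assoc)
  hence "\<forall>v. dN' \<beta>0 z v = - (D f z v \<odot> Hmc \<beta>0 f z)"
    unfolding Hmc_def by (rule someI[where x = H, OF allI])
  thus ?thesis by (metis minus_minus)
qed

text \<open>\<open>d^\<mu>\<alpha> = 0\<close> iff \<open>d\<phi> = conn_gauged \<mu> \<phi>\<close> for \<open>\<phi> = e^(-j\<beta>/2) \<alpha>\<close> (lemma \<open>dmu_gauge\<close>).\<close>

definition conn_gauged :: "complex \<Rightarrow> complex \<Rightarrow> complex \<Rightarrow> quat \<Rightarrow> quat" where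
  "conn_gauged \<beta>0 \<mu> v \<phi> = (let a = (\<mu> + inverse \<mu>) / 2; b = (inverse \<mu> - \<mu>) / 2 * \<i> in
     (1/2) *\<^sub>R ((qc v \<odot> dN_coeff \<beta>0) \<odot> (qi \<odot> \<phi> \<odot> qc (a - 1) + \<phi> \<odot> qc b))
       - (pi * (\<beta>0 \<bullet> v)) *\<^sub>R (qj \<odot> \<phi>))"

lemma dmu_gauge:
  assumes ham: "ham_stat_torus \<Gamma> \<beta>0 f" and "\<alpha> differentiable (at z)"
  shows "dmu \<beta>0 f \<mu> \<alpha> z v = ejb \<beta>0 z \<odot>
    (D (\<lambda>z. ejb_inv \<beta>0 z \<odot> \<alpha> z) z v - conn_gauged \<beta>0 \<mu> v (ejb_inv \<beta>0 z \<odot> \<alpha> z))"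
  unfolding dmu_def conn_gauged_def Let_def Df_Hmc[OF ham] dN'_eq_conj Nrm_eq_ejb
    D_eq_of_has_derivative[OF has_derivative_ejb_inv_qmul[OF has_derivative_D[OF assms(2)]]]
  by (simp add: qmul_assoc qmul_add_right qmul_add_left qmul_diff_right qmul_scaleR_right
      qmul_scaleR_left qmul_uminus_left qmul_uminus_right ejb_inv_qj algebra_simps)

definition conn_coeff :: "complex \<Rightarrow> complex \<Rightarrow> complex \<Rightarrow> complex" where
  "conn_coeff \<beta>0 \<mu> v = complex_of_real (pi/2) * (cnj v * \<beta>0 + \<mu> * v * cnj \<beta>0)"

lemma conn_gauged_Pair:
  assumes "\<mu> \<noteq> 0"
  shows "conn_gauged \<beta>0 \<mu> v (p, q) = (conn_coeff \<beta>0 \<mu> v * q, - conn_coeff \<beta>0 \<mu> v * p / \<mu>)"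
  using assms
  by (simp add: conn_gauged_def conn_coeff_def dN_coeff_def qc_def qi_def qj_def prod_eq_iff
      scaleR_conv_of_real of_real_inner_complex field_simps)

section \<open>Parallel sections are combinations of exponential sections\<close>

text \<open>For \<open>s\<^sup>2\<mu> = -1\<close> the eigenvalues of \<open>conn_gauged \<mu>\<close> are \<open>\<plusminus>\<Psi>\<^sub>s\<close>.\<close>

definition Psi :: "complex \<Rightarrow> complex \<Rightarrow> complex \<Rightarrow> complex" where
  "Psi \<beta>0 s z = complex_of_real (pi/2) * (s * \<beta>0 * cnj z - (cnj \<beta>0 / s) * z)"

lemma Psi_add: "Psi \<beta>0 s (z + w) = Psi \<beta>0 s z + Psi \<beta>0 s w"
  by (cases "s = 0") (simp_all add: Psi_def algebra_simps add_divide_distrib)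

lemma Psi_zero [simp]: "Psi \<beta>0 s 0 = 0"
  by (simp add: Psi_def)

lemma Psi_uminus: "Psi \<beta>0 (- s) z = - Psi \<beta>0 s z"
  by (simp add: Psi_def algebra_simps)

lemma Psi_has_derivative: "(Psi \<beta>0 s has_derivative Psi \<beta>0 s) (at z)"
proof -
  have "((\<lambda>z. complex_of_real (pi/2) * (s * \<beta>0 * cnj z - c * z)) has_derivative
      (\<lambda>v. complex_of_real (pi/2) * (s * \<beta>0 * cnj v - c * v))) (at z)" for c
    by (auto intro!: derivative_eq_intros)
  from this[of "cnj \<beta>0 / s"] show ?thesis unfolding Psi_def[abs_def] .
qed

lemma exp_Psi_has_derivative:
  "((\<lambda>z. exp (Psi \<beta>0 s z)) has_derivative (\<lambda>v. exp (Psi \<beta>0 s z) * Psi \<beta>0 s v)) (at z)"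
  by (rule has_derivative_compose[OF Psi_has_derivative, of exp])
    (metis DERIV_exp has_field_derivative_def)

lemma Re_Psi: "Re (Psi \<beta>0 s z) = (pi/2) * Re ((cnj (s * \<beta>0) - cnj \<beta>0 / s) * z)"
proof -
  have "Re (complex_of_real r * (a * cnj z - c * z)) = r * Re ((cnj a - c) * z)" for r a c
    by (simp add: algebra_simps)
  thus ?thesis unfolding Psi_def .
qed

lemma conn_coeff_Psi:
  assumes "s\<^sup>2 * \<mu> = -1"
  shows "s * conn_coeff \<beta>0 \<mu> v = Psi \<beta>0 s v"
    and "- conn_coeff \<beta>0 \<mu> v / \<mu> = s * Psi \<beta>0 s v"
proof -
  have s0: "s \<noteq> 0" using assms by auto
  have mu: "\<mu> = -1 / s\<^sup>2" using assms s0 by (simp add: field_simps)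
  show "s * conn_coeff \<beta>0 \<mu> v = Psi \<beta>0 s v" and "- conn_coeff \<beta>0 \<mu> v / \<mu> = s * Psi \<beta>0 s v"
    using s0 unfolding conn_coeff_def Psi_def mu by (simp_all add: field_simps power2_eq_square)
qed

lemma conn_gauged_eigen:
  assumes "s\<^sup>2 * \<mu> = -1"
  shows "conn_gauged \<beta>0 \<mu> v (w, s * w) = (Psi \<beta>0 s v * w, s * (Psi \<beta>0 s v * w))"
proof -
  have "\<mu> \<noteq> 0" using assms by auto
  then have "conn_gauged \<beta>0 \<mu> v (w, s * w) =
      ((s * conn_coeff \<beta>0 \<mu> v) * w, (- conn_coeff \<beta>0 \<mu> v / \<mu>) * w)"
    by (simp add: conn_gauged_Pair field_simps)
  also have "\<dots> = (Psi \<beta>0 s v * w, s * (Psi \<beta>0 s v * w))"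
    unfolding conn_coeff_Psi[OF assms] by (simp add: mult.assoc)
  finally show ?thesis .
qed

lemma exp_Psi_ode_unique:
  assumes "\<And>z. (u has_derivative (\<lambda>v. Psi \<beta>0 s v * u z)) (at z)"
  shows "u z = u 0 * exp (Psi \<beta>0 s z)"
proof -
  have "((\<lambda>z. u z * exp (- Psi \<beta>0 s z)) has_derivative (\<lambda>h. 0)) (at x within UNIV)" for x
  proof -
    have "((\<lambda>z. exp (- Psi \<beta>0 s z)) has_derivative (\<lambda>h. exp (- Psi \<beta>0 s x) * Psi \<beta>0 (- s) h)) (at x)"
      using exp_Psi_has_derivative[of \<beta>0 "- s" x] by (simp add: Psi_uminus)
    from has_derivative_mult[OF assms this] show ?thesis
      by (simp add: Psi_uminus algebra_simps)
  qed
  then obtain c where c: "\<forall>x\<in>UNIV. u x * exp (- Psi \<beta>0 s x) = c"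
    using has_derivative_zero_constant[of UNIV] by blast
  have "u 0 = c" using c[rule_format, of 0] by simp
  moreover have "u z = u z * exp (- Psi \<beta>0 s z) * exp (Psi \<beta>0 s z)"
    by (simp add: mult.assoc exp_add[symmetric])
  ultimately show ?thesis using c by auto
qed

lemma parallel_gauged_has_derivative:
  assumes ham: "ham_stat_torus \<Gamma> \<beta>0 f" and dif: "\<alpha> differentiable (at z)"
    and par: "\<And>v. dmu \<beta>0 f \<mu> \<alpha> z v = 0"
  shows "((\<lambda>z. ejb_inv \<beta>0 z \<odot> \<alpha> z) has_derivative
    (\<lambda>v. conn_gauged \<beta>0 \<mu> v (ejb_inv \<beta>0 z \<odot> \<alpha> z))) (at z)"
proof -
  let ?\<phi> = "\<lambda>z. ejb_inv \<beta>0 z \<odot> \<alpha> z"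
  note d\<phi> = has_derivative_ejb_inv_qmul[OF has_derivative_D[OF dif], of \<beta>0]
  have "(?\<phi> has_derivative D ?\<phi> z) (at z)"
    using d\<phi> by (simp only: D_eq_of_has_derivative[OF d\<phi>])
  moreover have "D ?\<phi> z = (\<lambda>v. conn_gauged \<beta>0 \<mu> v (?\<phi> z))"
  proof
    fix v
    have "ejb \<beta>0 z \<odot> (D ?\<phi> z v - conn_gauged \<beta>0 \<mu> v (?\<phi> z)) = 0"
      using dmu_gauge[OF ham dif] par by metis
    hence "ejb_inv \<beta>0 z \<odot> (ejb \<beta>0 z \<odot> (D ?\<phi> z v - conn_gauged \<beta>0 \<mu> v (?\<phi> z))) = 0"
      by simp
    thus "D ?\<phi> z v = conn_gauged \<beta>0 \<mu> v (?\<phi> z)" by simp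
  qed
  ultimately show ?thesis by simp
qed

lemma parallel_eigencomponent_has_derivative:
  assumes ham: "ham_stat_torus \<Gamma> \<beta>0 f" and dif: "\<alpha> differentiable (at z)"
    and par: "\<And>v. dmu \<beta>0 f \<mu> \<alpha> z v = 0" and s: "s\<^sup>2 * \<mu> = -1"
  defines "\<phi> \<equiv> \<lambda>z. ejb_inv \<beta>0 z \<odot> \<alpha> z"
  shows "((\<lambda>z. fst (\<phi> z) + snd (\<phi> z) / s) has_derivative
    (\<lambda>v. Psi \<beta>0 s v * (fst (\<phi> z) + snd (\<phi> z) / s))) (at z)"
proof -
  have mu: "\<mu> \<noteq> 0" and s0: "s \<noteq> 0" using s by auto
  have conn: "conn_gauged \<beta>0 \<mu> v (\<phi> z) =
      (conn_coeff \<beta>0 \<mu> v * snd (\<phi> z), - conn_coeff \<beta>0 \<mu> v * fst (\<phi> z) / \<mu>)" for v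
    using conn_gauged_Pair[OF mu, of \<beta>0 v "fst (\<phi> z)" "snd (\<phi> z)"] by simp
  have d\<phi>: "(\<phi> has_derivative (\<lambda>v. conn_gauged \<beta>0 \<mu> v (\<phi> z))) (at z)"
    unfolding \<phi>_def by (rule parallel_gauged_has_derivative[OF ham dif par])
  have "((\<lambda>z. fst (\<phi> z) + snd (\<phi> z) / s) has_derivative
     (\<lambda>v. conn_coeff \<beta>0 \<mu> v * snd (\<phi> z) + (- conn_coeff \<beta>0 \<mu> v * fst (\<phi> z) / \<mu>) / s)) (at z)"
    using has_derivative_add[OF has_derivative_fst[OF d\<phi>]
        bounded_linear.has_derivative[OF bounded_linear_divide has_derivative_snd[OF d\<phi>]]]
    unfolding conn by simp
  moreover have "conn_coeff \<beta>0 \<mu> v * snd (\<phi> z) + (- conn_coeff \<beta>0 \<mu> v * fst (\<phi> z) / \<mu>) / s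
      = Psi \<beta>0 s v * (fst (\<phi> z) + snd (\<phi> z) / s)" for v
  proof -
    have "conn_coeff \<beta>0 \<mu> v * snd (\<phi> z) + (- conn_coeff \<beta>0 \<mu> v * fst (\<phi> z) / \<mu>) / s
        = (s * conn_coeff \<beta>0 \<mu> v) * snd (\<phi> z) / s + (- conn_coeff \<beta>0 \<mu> v / \<mu>) * fst (\<phi> z) / s"
      using s0 mu by (simp add: field_simps)
    also have "\<dots> = Psi \<beta>0 s v * (fst (\<phi> z) + snd (\<phi> z) / s)"
      unfolding conn_coeff_Psi[OF s] using s0 by (simp add: field_simps)
    finally show ?thesis .
  qed
  ultimately show ?thesis by simp
qed

definition mono_sec :: "complex \<Rightarrow> complex \<Rightarrow> complex \<Rightarrow> quat" where
  "mono_sec \<beta>0 s z = ejb \<beta>0 z \<odot> (exp (Psi \<beta>0 s z), s * exp (Psi \<beta>0 s z))"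

lemma parallel_section_decomp:
  assumes ham: "ham_stat_torus \<Gamma> \<beta>0 f" and dif: "\<And>z. \<alpha> differentiable (at z)"
    and par: "\<And>z v. dmu \<beta>0 f \<mu> \<alpha> z v = 0" and s: "s\<^sup>2 * \<mu> = -1"
  obtains C1 C2 where "\<And>z. \<alpha> z = mono_sec \<beta>0 s z \<odot> qc C1 + mono_sec \<beta>0 (- s) z \<odot> qc C2"
proof -
  define \<phi> where "\<phi> = (\<lambda>z. ejb_inv \<beta>0 z \<odot> \<alpha> z)"
  define u where "u = (\<lambda>t z. fst (\<phi> z) + snd (\<phi> z) / t)"
  have s0: "s \<noteq> 0" using s by auto
  have u: "u t z = u t 0 * exp (Psi \<beta>0 t z)" if "t\<^sup>2 * \<mu> = -1" for t z
    unfolding u_def \<phi>_def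
    by (rule exp_Psi_ode_unique[OF parallel_eigencomponent_has_derivative[OF ham dif par that]])
  have "\<alpha> z = mono_sec \<beta>0 s z \<odot> qc (u s 0 / 2) + mono_sec \<beta>0 (- s) z \<odot> qc (u (- s) 0 / 2)" for z
  proof -
    have "\<alpha> z = ejb \<beta>0 z \<odot> (fst (\<phi> z), snd (\<phi> z))"
      unfolding prod.collapse \<phi>_def by simp
    also have "(fst (\<phi> z), snd (\<phi> z)) = ((u s z + u (- s) z) / 2, s * (u s z - u (- s) z) / 2)"
      using s0 by (simp add: u_def field_simps)
    also have "\<dots> = (exp (Psi \<beta>0 s z) * (u s 0 / 2) + exp (Psi \<beta>0 (- s) z) * (u (- s) 0 / 2),
        s * exp (Psi \<beta>0 s z) * (u s 0 / 2) + (- s) * exp (Psi \<beta>0 (- s) z) * (u (- s) 0 / 2))"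
      using u[OF s, of z] u[of "- s" z] s by (simp add: field_simps)
    finally show ?thesis
      by (simp add: mono_sec_def qmul_assoc qmul_qc_right qmul_add_right[symmetric])
  qed
  then show ?thesis using that by blast
qed

section \<open>The exponential sections are the monochromatic ones\<close>

lemma mono_sec_zero: "mono_sec \<beta>0 s 0 = (1, s)"
  by (simp add: mono_sec_def ejb_def qexpj_zero)

lemma mono_sec_parallel:
  assumes ham: "ham_stat_torus \<Gamma> \<beta>0 f" and s: "s\<^sup>2 * \<mu> = -1"
  shows "dmu \<beta>0 f \<mu> (\<lambda>z. mono_sec \<beta>0 s z \<odot> qc c) z v = 0"
proof -
  define \<phi> where "\<phi> = (\<lambda>z. (exp (Psi \<beta>0 s z) * c, s * (exp (Psi \<beta>0 s z) * c)))"
  have \<alpha>_eq: "(\<lambda>z. mono_sec \<beta>0 s z \<odot> qc c) = (\<lambda>z. ejb \<beta>0 z \<odot> \<phi> z)"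
    by (simp add: fun_eq_iff mono_sec_def \<phi>_def qmul_assoc qmul_qc_right mult.assoc)
  have d\<phi>: "(\<phi> has_derivative (\<lambda>v. conn_gauged \<beta>0 \<mu> v (\<phi> z))) (at z)" for z
  proof -
    have "((\<lambda>z. exp (Psi \<beta>0 s z) * c) has_derivative (\<lambda>v. Psi \<beta>0 s v * (exp (Psi \<beta>0 s z) * c))) (at z)"
      using has_derivative_mult_left[OF exp_Psi_has_derivative[of \<beta>0 s z], of c] by (simp add: algebra_simps)
    from has_derivative_Pair[OF this has_derivative_mult_right[OF this, of s]] show ?thesis
      by (simp add: \<phi>_def conn_gauged_eigen[OF s])
  qed
  have "(ejb \<beta>0 has_derivative (\<lambda>v. (pi * (\<beta>0 \<bullet> v)) *\<^sub>R (ejb \<beta>0 z \<odot> qj))) (at z)"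
    unfolding ejb_def[abs_def] by (rule qexpj_inner_has_derivative)
  then have dif: "(\<lambda>z. ejb \<beta>0 z \<odot> \<phi> z) differentiable (at z)"
    using bounded_bilinear.FDERIV[OF bounded_bilinear_qmul _ d\<phi>] unfolding differentiable_def by blast
  have "D (\<lambda>z. ejb_inv \<beta>0 z \<odot> (ejb \<beta>0 z \<odot> \<phi> z)) z = (\<lambda>v. conn_gauged \<beta>0 \<mu> v (\<phi> z))"
    using D_eq_of_has_derivative[OF d\<phi>] by simp
  then show ?thesis
    unfolding \<alpha>_eq dmu_gauge[OF ham dif] by simp
qed

lemma mono_sec_shift:
  assumes "\<beta>0 \<bullet> \<gamma> \<in> \<int>"
  shows "mono_sec \<beta>0 s (z + \<gamma>) =
    mono_sec \<beta>0 s z \<odot> qc (complex_of_real (cos (pi * (\<beta>0 \<bullet> \<gamma>))) * exp (Psi \<beta>0 s \<gamma>))"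
proof -
  define c where "c = complex_of_real (cos (pi * (\<beta>0 \<bullet> \<gamma>)))"
  have "mono_sec \<beta>0 s (z + \<gamma>) = ejb \<beta>0 z \<odot> (qc c \<odot> (exp (Psi \<beta>0 s z) * exp (Psi \<beta>0 s \<gamma>),
      s * (exp (Psi \<beta>0 s z) * exp (Psi \<beta>0 s \<gamma>))))"
    by (simp add: mono_sec_def ejb_shift[OF assms] c_def Psi_add exp_add qmul_assoc)
  also have "\<dots> = mono_sec \<beta>0 s z \<odot> qc (c * exp (Psi \<beta>0 s \<gamma>))"
    by (simp add: mono_sec_def qmul_assoc c_def qc_def prod_eq_iff algebra_simps)
  finally show ?thesis by (simp add: c_def)
qed

lemma mono_sec_has_multiplier:
  assumes "\<beta>0 \<in> dual_lattice \<Gamma>"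
  shows "has_multiplier \<Gamma> (mono_sec \<beta>0 s)"
proof -
  have "\<gamma> \<in> \<Gamma> \<Longrightarrow> \<beta>0 \<bullet> \<gamma> \<in> \<int>" for \<gamma>
    using assms by (simp add: dual_lattice_def)
  then show ?thesis
    unfolding has_multiplier_def
    using qexpj_pi_int(3) mono_sec_shift
    by (intro exI[of _ "\<lambda>\<gamma>. complex_of_real (cos (pi * (\<beta>0 \<bullet> \<gamma>))) * exp (Psi \<beta>0 s \<gamma>)"]) auto
qed

text \<open>The parameters \<open>A, B, \<delta>\<close> of a monochromatic section enter only through
  \<open>D = \<delta> - B\<close>, \<open>A\<close> and \<open>\<lambda> = -i s\<close>, and the exponent \<open>2\<pi>(\<langle>A,z\<rangle> + i\<langle>D,z\<rangle>)\<close> is \<open>\<Psi>\<^sub>s(z)\<close>.\<close>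

lemma monochromatic_form_eq_mono_sec:
  assumes "complex_of_real (2 * pi * (A \<bullet> z)) + 2 * pi * \<i> * complex_of_real (Dd \<bullet> z) = Psi \<beta>0 s z"
  shows "qexpj (beta \<beta>0 z / 2) \<odot> (qc 1 - qk \<odot> qc (- \<i> * s)) \<odot> qc (e_exp Dd z)
      \<odot> qc (complex_of_real (exp (2 * pi * (A \<bullet> z)))) \<odot> qc c = mono_sec \<beta>0 s z \<odot> qc c"
proof -
  have "qc 1 - qk \<odot> qc (- \<i> * s) = (1, s)"
    by (simp add: qc_def qk_def prod_eq_iff)
  moreover have "beta \<beta>0 z / 2 = pi * (\<beta>0 \<bullet> z)"
    by (simp add: beta_def)
  moreover have "e_exp Dd z * complex_of_real (exp (2 * pi * (A \<bullet> z))) = exp (Psi \<beta>0 s z)"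
    unfolding e_exp_def assms[symmetric] exp_of_real[symmetric] exp_add by (simp add: mult.commute)
  ultimately show ?thesis
    by (simp add: mono_sec_def ejb_def qmul_assoc qc_mult qmul_qc_right mult.assoc)
qed

lemma mono_sec_exponent_data:
  fixes s \<beta>0 :: complex
  assumes s: "s \<noteq> 0"
  defines "A \<equiv> (s * \<beta>0 / 2 - \<beta>0 / (2 * cnj s)) / 2"
    and "Dd \<equiv> - \<i> * (s * \<beta>0 / 2 + \<beta>0 / (2 * cnj s)) / 2"
  shows "complex_of_real (2 * pi * (A \<bullet> z)) + 2 * pi * \<i> * complex_of_real (Dd \<bullet> z) = Psi \<beta>0 s z"
    and "(cmod Dd)\<^sup>2 - (cmod A)\<^sup>2 = (cmod \<beta>0)\<^sup>2 / 4"
    and "Dd \<bullet> A = 0"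
    and "\<beta>0 \<noteq> 0 \<Longrightarrow> lam \<beta>0 A (\<beta>0 / 2 - Dd) (\<beta>0 / 2) = - \<i> * s"
proof -
  have cs: "cnj s \<noteq> 0" using s by simp
  show "complex_of_real (2 * pi * (A \<bullet> z)) + 2 * pi * \<i> * complex_of_real (Dd \<bullet> z) = Psi \<beta>0 s z"
    unfolding of_real_mult of_real_inner_complex Psi_def A_def Dd_def using s cs
    by (simp add: field_simps)
  have "complex_of_real ((cmod Dd)\<^sup>2 - (cmod A)\<^sup>2) = complex_of_real ((cmod \<beta>0)\<^sup>2 / 4)"
    unfolding of_real_diff of_real_divide complex_norm_square A_def Dd_def using s cs
    by (simp add: field_simps)
  thus "(cmod Dd)\<^sup>2 - (cmod A)\<^sup>2 = (cmod \<beta>0)\<^sup>2 / 4"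
    using of_real_eq_iff by blast
  have "complex_of_real (Dd \<bullet> A) = 0"
    unfolding of_real_inner_complex A_def Dd_def using s cs by (simp add: field_simps)
  thus "Dd \<bullet> A = 0" by simp
  show "\<beta>0 \<noteq> 0 \<Longrightarrow> lam \<beta>0 A (\<beta>0 / 2 - Dd) (\<beta>0 / 2) = - \<i> * s"
    unfolding lam_def A_def Dd_def using s cs by (simp add: field_simps)
qed

lemma mono_sec_monochromatic:
  assumes "s \<noteq> 0" and "\<beta>0 \<noteq> 0"
  shows "monochromatic \<Gamma> \<beta>0 (mono_sec \<beta>0 s)"
proof -
  define A where "A = (s * \<beta>0 / 2 - \<beta>0 / (2 * cnj s)) / 2"
  define Dd where "Dd = - \<i> * (s * \<beta>0 / 2 + \<beta>0 / (2 * cnj s)) / 2"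
  note data = mono_sec_exponent_data[OF assms(1), where ?\<beta>0.0 = \<beta>0, folded A_def Dd_def]
  have "0 \<in> dual_lattice \<Gamma>"
    by (simp add: dual_lattice_def)
  then have "\<beta>0 / 2 \<in> Gamma_AB \<Gamma> \<beta>0 A (\<beta>0 / 2 - Dd)"
    unfolding Gamma_AB_def using data(2,3) by (auto intro: image_eqI[of _ _ 0])
  moreover have "mono_sec \<beta>0 s = (\<lambda>z. qexpj (beta \<beta>0 z / 2)
      \<odot> (qc 1 - qk \<odot> qc (lam \<beta>0 A (\<beta>0 / 2 - Dd) (\<beta>0 / 2)))
      \<odot> qc (e_exp (\<beta>0 / 2 - (\<beta>0 / 2 - Dd)) z) \<odot> qc (complex_of_real (exp (2 * pi * (A \<bullet> z)))) \<odot> qc 1)"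
    using monochromatic_form_eq_mono_sec[OF data(1), where c = 1] by (simp add: fun_eq_iff data(4)[OF assms(2)])
  ultimately show ?thesis
    unfolding monochromatic_def
    by (intro exI[of _ A] exI[of _ "\<beta>0 / 2 - Dd"] exI[of _ "\<beta>0 / 2"] exI[of _ 1]) simp
qed

lemma monochromatic_data_Psi:
  assumes b: "\<beta>0 \<noteq> 0" and c1: "(cmod Dd)\<^sup>2 - (cmod A)\<^sup>2 = (cmod \<beta>0)\<^sup>2 / 4" and c2: "Dd \<bullet> A = 0"
  defines "s \<equiv> \<i> * (2 / \<beta>0 * (Dd - \<i> * A))"
  shows "s \<noteq> 0"
    and "complex_of_real (2 * pi * (A \<bullet> z)) + 2 * pi * \<i> * complex_of_real (Dd \<bullet> z) = Psi \<beta>0 s z"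
proof -
  define U where "U = A + \<i> * Dd"
  have sU: "s = 2 * U / \<beta>0" unfolding s_def U_def using b by (simp add: field_simps)
  have "(cnj A + \<i> * cnj Dd) * U = A * cnj A - Dd * cnj Dd + \<i> * (cnj Dd * A + Dd * cnj A)"
    by (simp add: U_def algebra_simps)
  also have "\<dots> = complex_of_real ((cmod A)\<^sup>2 - (cmod Dd)\<^sup>2) + \<i> * (2 * complex_of_real (Dd \<bullet> A))"
    unfolding of_real_diff complex_norm_square of_real_inner_complex by (simp add: algebra_simps)
  also have "\<dots> = - (\<beta>0 * cnj \<beta>0) / 4"
  proof -
    have c1': "(cmod A)\<^sup>2 - (cmod Dd)\<^sup>2 = - ((cmod \<beta>0)\<^sup>2 / 4)" using c1 by simp
    show ?thesis unfolding c1'  c2 of_real_minus of_real_divide complex_norm_square by simp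
  qed
  finally have UU: "(cnj A + \<i> * cnj Dd) * U = - (\<beta>0 * cnj \<beta>0) / 4" .
  have U0: "U \<noteq> 0" using UU b by auto
  thus "s \<noteq> 0" using b by (simp add: sU)
  have "complex_of_real (2 * pi * (A \<bullet> z)) + 2 * pi * \<i> * complex_of_real (Dd \<bullet> z)
      = pi * ((cnj A + \<i> * cnj Dd) * z) + pi * (U * cnj z)"
    unfolding of_real_mult of_real_inner_complex U_def by (simp add: field_simps)
  also have "\<dots> = Psi \<beta>0 s z"
  proof -
    have "4 * ((cnj A + \<i> * cnj Dd) * U) = - (\<beta>0 * cnj \<beta>0)"
      unfolding UU by simp
    then have "\<beta>0 * cnj \<beta>0 = - 4 * (cnj A + \<i> * cnj Dd) * U"
      by (metis minus_minus mult.assoc mult_minus_left)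
    then have c: "cnj \<beta>0 / s = - 2 * (cnj A + \<i> * cnj Dd)"
      using b U0 by (simp add: sU field_simps)
    have a: "s * \<beta>0 = 2 * U" using b by (simp add: sU)
    show ?thesis unfolding Psi_def a c by (simp add: algebra_simps)
  qed
  finally show "complex_of_real (2 * pi * (A \<bullet> z)) + 2 * pi * \<i> * complex_of_real (Dd \<bullet> z) = Psi \<beta>0 s z" .
qed

lemma monochromatic_imp_mono_sec:
  assumes "\<beta>0 \<noteq> 0" and "monochromatic \<Gamma> \<beta>0 \<alpha>"
  obtains s c where "s \<noteq> 0" "c \<noteq> 0" "\<alpha> = (\<lambda>z. mono_sec \<beta>0 s z \<odot> qc c)"
proof -
  obtain A B \<delta> c where \<delta>: "\<delta> \<in> Gamma_AB \<Gamma> \<beta>0 A B" and c: "c \<noteq> 0" and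
    \<alpha>: "\<alpha> = (\<lambda>z. qexpj (beta \<beta>0 z / 2) \<odot> (qc 1 - qk \<odot> qc (lam \<beta>0 A B \<delta>))
               \<odot> qc (e_exp (\<delta> - B) z) \<odot> qc (complex_of_real (exp (2 * pi * (A \<bullet> z)))) \<odot> qc c)"
    using assms(2) unfolding monochromatic_def by blast
  define s where "s = \<i> * (2 / \<beta>0 * (\<delta> - B - \<i> * A))"
  have "(cmod (\<delta> - B))\<^sup>2 - (cmod A)\<^sup>2 = (cmod \<beta>0)\<^sup>2 / 4" and "(\<delta> - B) \<bullet> A = 0"
    using \<delta> unfolding Gamma_AB_def by auto
  note data = monochromatic_data_Psi[OF assms(1) this, folded s_def]
  have "lam \<beta>0 A B \<delta> = - \<i> * s"
    by (simp add: s_def lam_def algebra_simps)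
  then have "\<alpha> = (\<lambda>z. mono_sec \<beta>0 s z \<odot> qc c)"
    unfolding \<alpha> using monochromatic_form_eq_mono_sec[OF data(2)] by simp
  with data(1) c that show ?thesis by blast
qed

section \<open>Closed parallel sections have a single exponential\<close>

lemma Re_mult_eq_0_imp_eq_0:
  fixes W w1 w2 :: complex
  assumes "Re (W * w1) = 0" "Re (W * w2) = 0" and "Im (cnj w1 * w2) \<noteq> 0"
  shows "W = 0"
proof -
  define d where "d = Re w1 * Im w2 - Re w2 * Im w1"
  have d: "d \<noteq> 0" using assms(3) by (simp add: d_def algebra_simps)
  have e1: "Re W * Re w1 = Im W * Im w1" and e2: "Re W * Re w2 = Im W * Im w2"
    using assms(1,2) by auto
  have "Re W * d = 0" "Im W * d = 0"
    unfolding d_def by (smt (verit, ccfv_threshold) e1 e2 mult.commute mult.left_commute right_diff_distrib)+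
  with d show ?thesis by (simp add: complex_eq_iff)
qed

lemma exp_eq_exp_uminus_imp_Re_0:
  assumes "exp w = exp (- w)"
  shows "Re w = 0"
proof -
  have "exp (Re w) = exp (- Re w)"
    using arg_cong[OF assms, of norm] by simp
  then show ?thesis by simp
qed

lemma Re_Psi_zero_on_lattice:
  assumes b: "\<beta>0 \<in> dual_lattice \<Gamma>" and s: "s \<noteq> 0" and mult: "has_multiplier \<Gamma> \<alpha>"
    and dec: "\<And>z. \<alpha> z = mono_sec \<beta>0 s z \<odot> qc C1 + mono_sec \<beta>0 (- s) z \<odot> qc C2"
    and C: "C1 \<noteq> 0" "C2 \<noteq> 0" and \<gamma>: "\<gamma> \<in> \<Gamma>"
  shows "Re (Psi \<beta>0 s \<gamma>) = 0"
proof -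
  obtain h where h: "\<forall>z. \<alpha> (z + \<gamma>) = \<alpha> z \<odot> qc (h \<gamma>)"
    using mult \<gamma> unfolding has_multiplier_def by blast
  have int: "\<beta>0 \<bullet> \<gamma> \<in> \<int>" using b \<gamma> by (simp add: dual_lattice_def)
  define c where "c = complex_of_real (cos (pi * (\<beta>0 \<bullet> \<gamma>)))"
  have c0: "c \<noteq> 0" using qexpj_pi_int(3)[OF int] by (simp add: c_def)
  define a where "a = c * exp (Psi \<beta>0 s \<gamma>) * C1 - C1 * h \<gamma>"
  define b where "b = c * exp (Psi \<beta>0 (- s) \<gamma>) * C2 - C2 * h \<gamma>"
  have "\<alpha> (0 + \<gamma>) = \<alpha> 0 \<odot> qc (h \<gamma>)" using h by blast
  then have "(a + b, s * (a - b)) = 0"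
    unfolding dec mono_sec_shift[OF int, folded c_def]
    by (simp add: mono_sec_zero qc_def prod_eq_iff a_def b_def algebra_simps)
  then have "a + b = 0" "s * (a - b) = 0"
    by (metis fst_conv snd_conv fst_zero snd_zero)+
  then have "a + b = 0" "a - b = 0"
    using s by simp_all
  then have "a = 0" "b = 0"
    by (auto simp: complex_eq_iff)
  then have "c * exp (Psi \<beta>0 s \<gamma>) = c * exp (Psi \<beta>0 (- s) \<gamma>)"
    using C by (simp add: a_def b_def field_simps)
  then have "exp (Psi \<beta>0 s \<gamma>) = exp (- Psi \<beta>0 s \<gamma>)"
    using c0 by (simp add: Psi_uminus)
  then show ?thesis by (rule exp_eq_exp_uminus_imp_Re_0)
qed

lemma unit_of_Re_Psi_zero_on_lattice:
  assumes "lattice \<Gamma>" and "\<beta>0 \<noteq> 0" and "s \<noteq> 0"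
    and Re0: "\<And>\<gamma>. \<gamma> \<in> \<Gamma> \<Longrightarrow> Re (Psi \<beta>0 s \<gamma>) = 0"
  shows "cnj s * s = 1"
proof -
  obtain w1 w2 where w: "Im (cnj w1 * w2) \<noteq> 0" "\<Gamma> = {of_int m * w1 + of_int n * w2 | m n. True}"
    using assms(1) unfolding lattice_def by blast
  have "w1 \<in> \<Gamma>"
    unfolding w(2) by (rule CollectI, rule exI[of _ 1], rule exI[of _ 0]) simp
  have "w2 \<in> \<Gamma>"
    unfolding w(2) by (rule CollectI, rule exI[of _ 0], rule exI[of _ 1]) simp
  define W where "W = cnj (s * \<beta>0) - cnj \<beta>0 / s"
  have "Re (W * w1) = 0" "Re (W * w2) = 0"
    using Re0[OF \<open>w1 \<in> \<Gamma>\<close>] Re0[OF \<open>w2 \<in> \<Gamma>\<close>] by (simp_all add: Re_Psi W_def)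
  then have "W = 0" using Re_mult_eq_0_imp_eq_0 w(1) by blast
  then have "cnj s * cnj \<beta>0 = cnj \<beta>0 / s" by (simp add: W_def)
  then show ?thesis using assms(2,3) by (simp add: field_simps)
qed

lemma mono_sec_uminus:
  assumes "cnj s * s = 1"
  shows "mono_sec \<beta>0 (- s) z = mono_sec \<beta>0 s z \<odot> (qj \<odot> qc (- s))"
proof -
  have s0: "s \<noteq> 0" using assms by auto
  have cs: "cnj s = 1 / s" using assms s0 by (simp add: field_simps)
  have "cnj (Psi \<beta>0 s z) = Psi \<beta>0 (- s) z"
    using s0 by (simp add: Psi_def cs field_simps)
  then have "cnj (exp (Psi \<beta>0 s z)) = exp (Psi \<beta>0 (- s) z)"
    by (simp add: exp_cnj)
  then have "(exp (Psi \<beta>0 s z), s * exp (Psi \<beta>0 s z)) \<odot> (qj \<odot> qc (- s))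
      = (exp (Psi \<beta>0 (- s) z), - s * exp (Psi \<beta>0 (- s) z))"
    using assms by (auto simp: qj_def qc_def prod_eq_iff algebra_simps)
  then show ?thesis by (simp add: mono_sec_def qmul_assoc)
qed

lemma closed_parallel_section_mono_sec_multiple:
  assumes ham: "ham_stat_torus \<Gamma> \<beta>0 f" and cds: "closed_darboux_section \<Gamma> \<beta>0 \<alpha>"
    and par: "\<And>z v. dmu \<beta>0 f \<mu> \<alpha> z v = 0" and mu: "\<mu> \<noteq> 0"
  obtains s Q where "s \<noteq> 0" "Q \<noteq> 0" "\<And>z. \<alpha> z = mono_sec \<beta>0 s z \<odot> Q"
proof -
  have lat: "lattice \<Gamma>" and \<beta>0: "\<beta>0 \<in> dual_lattice \<Gamma>" "\<beta>0 \<noteq> 0"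
    using ham unfolding ham_stat_torus_def by auto
  have sm: "smooth \<alpha>" and nz: "\<And>z. \<alpha> z \<noteq> 0" and mult: "has_multiplier \<Gamma> \<alpha>"
    using cds unfolding closed_darboux_section_def by auto
  define s where "s = csqrt (- 1 / \<mu>)"
  have s2: "s\<^sup>2 * \<mu> = -1" using mu by (simp add: s_def)
  then have s: "s \<noteq> 0" "- s \<noteq> 0" by auto
  obtain C1 C2 where dec: "\<And>z. \<alpha> z = mono_sec \<beta>0 s z \<odot> qc C1 + mono_sec \<beta>0 (- s) z \<odot> qc C2"
    using parallel_section_decomp[OF ham smooth_imp_differentiable[OF sm] par s2] by blast
  consider "C2 = 0" | "C1 = 0" | "C1 \<noteq> 0" "C2 \<noteq> 0" by blast
  then show ?thesis
  proof cases
    case 1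
    then have \<alpha>1: "\<alpha> z = mono_sec \<beta>0 s z \<odot> qc C1" for z
      using dec by simp
    then have "qc C1 \<noteq> 0" using nz[of 0] by auto
    with \<alpha>1 show ?thesis using that[OF s(1)] by blast
  next
    case 2
    then have \<alpha>2: "\<alpha> z = mono_sec \<beta>0 (- s) z \<odot> qc C2" for z
      using dec by simp
    then have "qc C2 \<noteq> 0" using nz[of 0] by auto
    with \<alpha>2 show ?thesis using that[OF s(2)] by blast
  next
    case 3
    then have unit: "cnj s * s = 1"
      using unit_of_Re_Psi_zero_on_lattice[OF lat \<beta>0(2) s(1)] Re_Psi_zero_on_lattice[OF \<beta>0(1) s(1) mult dec]
      by blast
    have "\<alpha> z = mono_sec \<beta>0 s z \<odot> (qc C1 + qj \<odot> qc (- s * C2))" for z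
      unfolding dec mono_sec_uminus[OF unit] by (simp add: qmul_assoc qc_mult qmul_add_right)
    moreover have "qc C1 + qj \<odot> qc (- s * C2) \<noteq> 0"
      using 3 by (simp add: qc_def qj_def prod_eq_iff)
    ultimately show ?thesis using that[OF s(1)] by blast
  qed
qed

section \<open>Right multiplication by a constant does not change the transform\<close>

lemma holomorphic_sec_qmul_const:
  assumes "smooth \<alpha>" and "holomorphic_sec \<beta>0 \<alpha>"
  shows "holomorphic_sec \<beta>0 (\<lambda>z. \<alpha> z \<odot> r)"
  using assms unfolding holomorphic_sec_def by (simp add: D_qmul_const smooth_imp_differentiable qmul_assoc)

lemma That_qmul_const:
  assumes "\<alpha> differentiable (at z)" and "r \<noteq> 0"
  shows "That f (\<lambda>z. \<alpha> z \<odot> r) z = That f \<alpha> z"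
proof -
  have "D (\<lambda>z. \<alpha> z \<odot> r) z v = - (D f z v \<odot> t \<odot> (\<alpha> z \<odot> r)) \<longleftrightarrow> D \<alpha> z v = - (D f z v \<odot> t \<odot> \<alpha> z)"
    for t v
  proof -
    have "- (D f z v \<odot> t \<odot> (\<alpha> z \<odot> r)) = (- (D f z v \<odot> t \<odot> \<alpha> z)) \<odot> r"
      by (simp add: qmul_assoc qmul_uminus_left)
    then show ?thesis by (simp add: D_qmul_const assms qmul_cancel_right)
  qed
  then show ?thesis unfolding That_def by simp
qed

lemma darboux_given_by_qmul_const:
  assumes dif: "\<And>z. \<alpha> differentiable (at z)" and r: "r \<noteq> 0" and db: "darboux_given_by f \<alpha> fh"
  shows "darboux_given_by f (\<lambda>z. \<alpha> z \<odot> r) fh"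
  unfolding darboux_given_by_def
proof
  fix z
  obtain q where q0: "q \<noteq> 0"
    and eq: "(f z \<odot> nu f \<alpha> z + \<alpha> z, nu f \<alpha> z) = (fh z \<odot> q, qc 1 \<odot> q)"
    using db unfolding darboux_given_by_def by blast
  have nu_q: "nu f \<alpha> z = q" using eq by simp
  have q: "f z \<odot> q + \<alpha> z = fh z \<odot> q" using eq unfolding nu_q by simp
  have nu: "nu f (\<lambda>z. \<alpha> z \<odot> r) z = q \<odot> r"
    unfolding nu_def That_qmul_const[OF dif r] nu_q[symmetric] by (simp add: nu_def qmul_assoc)
  have "f z \<odot> nu f (\<lambda>z. \<alpha> z \<odot> r) z + \<alpha> z \<odot> r = fh z \<odot> (q \<odot> r)"
    using arg_cong[OF q, of "\<lambda>x. x \<odot> r"] by (simp add: nu qmul_assoc qmul_add_left)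
  with q0 r show "\<exists>q. q \<noteq> 0 \<and> (f z \<odot> nu f (\<lambda>z. \<alpha> z \<odot> r) z + \<alpha> z \<odot> r, nu f (\<lambda>z. \<alpha> z \<odot> r) z)
      = (fh z \<odot> q, qc 1 \<odot> q)"
    by (intro exI[of _ "q \<odot> r"]) (simp add: nu qmul_nonzero)
qed

lemma mono_darboux_of_mono_sec_multiple:
  assumes ham: "ham_stat_torus \<Gamma> \<beta>0 f" and cds: "closed_darboux_section \<Gamma> \<beta>0 \<alpha>"
    and db: "darboux_given_by f \<alpha> fh" and s: "s \<noteq> 0" and Q: "Q \<noteq> 0"
    and \<alpha>: "\<And>z. \<alpha> z = mono_sec \<beta>0 s z \<odot> Q"
  shows "mono_darboux \<Gamma> \<beta>0 f fh"
proof -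
  have \<beta>0: "\<beta>0 \<in> dual_lattice \<Gamma>" "\<beta>0 \<noteq> 0"
    using ham unfolding ham_stat_torus_def by auto
  have sm: "smooth \<alpha>" and nz: "\<And>z. \<alpha> z \<noteq> 0" and hol: "holomorphic_sec \<beta>0 \<alpha>"
    using cds unfolding closed_darboux_section_def by auto
  have mono_sec_eq: "mono_sec \<beta>0 s = (\<lambda>z. \<alpha> z \<odot> qinv Q)"
    by (simp add: fun_eq_iff \<alpha> qmul_assoc qinv_right[OF Q])
  have "closed_darboux_section \<Gamma> \<beta>0 (mono_sec \<beta>0 s)"
    unfolding closed_darboux_section_def
    using smooth_qmul_const[OF sm] qmul_nonzero[OF nz qinv_nonzero[OF Q]] holomorphic_sec_qmul_const[OF sm hol]
      mono_sec_has_multiplier[OF \<beta>0(1), of s, unfolded mono_sec_eq]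
    unfolding mono_sec_eq by blast
  moreover have "darboux_given_by f (mono_sec \<beta>0 s) fh"
    unfolding mono_sec_eq
    using darboux_given_by_qmul_const[OF smooth_imp_differentiable[OF sm] qinv_nonzero[OF Q] db] .
  moreover have "monochromatic \<Gamma> \<beta>0 (mono_sec \<beta>0 s)"
    by (rule mono_sec_monochromatic[OF s \<beta>0(2)])
  ultimately show ?thesis unfolding mono_darboux_def by blast
qed

lemma closed_mu_darboux_imp_mono_darboux:
  assumes ham: "ham_stat_torus \<Gamma> \<beta>0 f" and "\<mu> \<noteq> 0" and "closed_mu_darboux \<Gamma> \<beta>0 f \<mu> fh"
  shows "mono_darboux \<Gamma> \<beta>0 f fh"
proof -
  obtain \<alpha> where cds: "closed_darboux_section \<Gamma> \<beta>0 \<alpha>" and par: "\<And>z v. dmu \<beta>0 f \<mu> \<alpha> z v = 0"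
    and db: "darboux_given_by f \<alpha> fh"
    using assms(3) unfolding closed_mu_darboux_def by blast
  obtain s Q where "s \<noteq> 0" "Q \<noteq> 0" "\<And>z. \<alpha> z = mono_sec \<beta>0 s z \<odot> Q"
    using closed_parallel_section_mono_sec_multiple[OF ham cds par assms(2)] by blast
  then show ?thesis by (rule mono_darboux_of_mono_sec_multiple[OF ham cds db])
qed

lemma mono_darboux_imp_closed_mu_darboux:
  assumes ham: "ham_stat_torus \<Gamma> \<beta>0 f" and "mono_darboux \<Gamma> \<beta>0 f fh"
  shows "\<exists>\<mu>. \<mu> \<noteq> 0 \<and> closed_mu_darboux \<Gamma> \<beta>0 f \<mu> fh"
proof -
  obtain \<alpha> where mono: "monochromatic \<Gamma> \<beta>0 \<alpha>" and cds: "closed_darboux_section \<Gamma> \<beta>0 \<alpha>"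
    and db: "darboux_given_by f \<alpha> fh"
    using assms(2) unfolding mono_darboux_def by blast
  have "\<beta>0 \<noteq> 0" using ham unfolding ham_stat_torus_def by auto
  then obtain s c where s: "s \<noteq> 0" and \<alpha>: "\<alpha> = (\<lambda>z. mono_sec \<beta>0 s z \<odot> qc c)"
    using monochromatic_imp_mono_sec[OF _ mono] by blast
  define \<mu> where "\<mu> = - 1 / s\<^sup>2"
  have s2: "s\<^sup>2 * \<mu> = -1" using s by (simp add: \<mu>_def)
  then have "\<mu> \<noteq> 0" by auto
  moreover have "dmu \<beta>0 f \<mu> \<alpha> z v = 0" for z v
    unfolding \<alpha> by (rule mono_sec_parallel[OF ham s2])
  ultimately show ?thesis
    unfolding closed_mu_darboux_def using cds db by blast
qed

theorem theorem5p5: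
  fixes \<Gamma> :: "complex set" and \<beta>0 :: complex and f fh :: "complex \<Rightarrow> quat"
  assumes "ham_stat_torus \<Gamma> \<beta>0 f"
  shows "(\<exists>\<mu>. \<mu> \<noteq> 0 \<and> closed_mu_darboux \<Gamma> \<beta>0 f \<mu> fh) \<longleftrightarrow> mono_darboux \<Gamma> \<beta>0 f fh"
  using closed_mu_darboux_imp_mono_darboux[OF assms] mono_darboux_imp_closed_mu_darboux[OF assms]
  by blast

end
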